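(* Let $(M,d)$ be a metric space, let $X\subseteq M$ with $|X|=t$, let $h$ be an integer with $1\le h\le t$, and let $Y\subseteq M$ be a nonempty finite set. Then there exists a subset $S\subseteq Y$ such that (A) $|S|\le t/h$, and (B) for every $y\in Y$, $d_S(y,1)\le 2\,d_X(y,h)$.
   Context: For a finite set $S\subseteq M$, a point $p\in M$ and an integer $1\le i\le|S|$, $d_S(p,i)$ denotes the radius of the smallest closed ball centered at $p$ containing at least $i$ points of $S$; in particular $d_S(p,1)$ is the distance from $p$ to the nearest point of $S$. *)

theory Defs
  imports "HOL-Analysis.Analysis"
begin

text \<open>d_S(p,i): radius of the smallest closed ball centred at p containing at least
  i points of S (meaningful for finite S and 1 <= i <= card S, where the infimum is attained).\<close>
definition dS :: "'a::metric_space set \<Rightarrow> 'a \<Rightarrow> nat \<Rightarrow> real" where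
  "dS S p i = Inf {r. 0 \<le> r \<and> i \<le> card {s \<in> S. dist p s \<le> r}}"

end

theory Submission
  imports Defs
begin

text \<open>Let \<open>r y = d_X(y,h)\<close>. Greedily pick a point \<open>y\<close> of \<open>Y\<close> of smallest radius,
  discard every point \<open>z\<close> with \<open>dist z y \<le> 2 r z\<close>, and recurse. Since \<open>y\<close> has the smallest
  radius, any two chosen points \<open>s, s'\<close> satisfy \<open>r s + r s' < dist s s'\<close>, so the closed
  balls \<open>cball s (r s)\<close> are pairwise disjoint; each contains at least \<open>h\<close> points of \<open>X\<close>,
  hence at most \<open>t / h\<close> points are chosen. Every discarded \<open>z\<close> lies within \<open>2 r z\<close> of a
  chosen point, which bounds \<open>d_S(z,1)\<close>.\<close>

lemma dS_le:
  assumes "0 \<le> r" "i \<le> card (S \<inter> cball p r)"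
  shows "dS S p i \<le> r"
  unfolding dS_def
  by (rule cInf_lower) (use assms in \<open>auto simp: Int_def mem_cball intro: bdd_belowI[of _ 0]\<close>)

lemma dS_1_le_dist:
  assumes "finite S" "s \<in> S"
  shows "dS S p 1 \<le> dist p s"
proof (rule dS_le)
  have "s \<in> S \<inter> cball p (dist p s)" using assms(2) by simp
  then show "1 \<le> card (S \<inter> cball p (dist p s))"
    using assms(1) by (metis One_nat_def Suc_leI card_gt_0_iff empty_iff finite_Int)
qed simp

lemma finite_cball_shrink_to_distance:
  assumes "finite X" "0 \<le> r"
  obtains c where "c \<in> insert 0 (dist p ` X)" "c \<le> r" "X \<inter> cball p c = X \<inter> cball p r"
proof
  let ?c = "Max (insert 0 (dist p ` (X \<inter> cball p r)))"
  have fin: "finite (insert 0 (dist p ` (X \<inter> cball p r)))" using assms(1) by simp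
  show "?c \<in> insert 0 (dist p ` X)" using Max_in[OF fin] by auto
  show "?c \<le> r" using fin assms(2) by (simp add: Max_le_iff)
  show "X \<inter> cball p ?c = X \<inter> cball p r"
    using fin \<open>?c \<le> r\<close> by (auto simp: Max_ge_iff)
qed

lemma dS_attained:
  assumes "finite X" "h \<le> card X"
  shows "0 \<le> dS X p h \<and> h \<le> card (X \<inter> cball p (dS X p h))"
proof -
  define R where "R = {r. 0 \<le> r \<and> h \<le> card (X \<inter> cball p r)}"
  have dS_eq: "dS X p h = Inf R"
    unfolding dS_def R_def by (simp add: Int_def mem_cball)
  define D where "D = {c \<in> insert 0 (dist p ` X). h \<le> card (X \<inter> cball p c)}"
  have D_below: "\<exists>c\<in>D. c \<le> r" if "r \<in> R" for r
  proof -
    from that have "0 \<le> r" by (simp add: R_def)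
    with assms(1) obtain c where "c \<in> insert 0 (dist p ` X)" "c \<le> r"
        "X \<inter> cball p c = X \<inter> cball p r"
      by (rule finite_cball_shrink_to_distance)
    with that show ?thesis by (auto simp: D_def R_def)
  qed
  define r\<^sub>0 where "r\<^sub>0 = Max (insert 0 (dist p ` X))"
  have "X \<inter> cball p r\<^sub>0 = X" using assms(1) by (auto simp: r\<^sub>0_def)
  then have "r\<^sub>0 \<in> R" using assms by (simp add: R_def r\<^sub>0_def)
  then have "D \<noteq> {}" using D_below by blast
  moreover have "finite D" using assms(1) by (simp add: D_def)
  ultimately have "Min D \<in> D" by (rule Min_in[rotated])
  then have "Min D \<in> R" by (auto simp: D_def R_def)
  moreover have "Min D \<le> r" if "r \<in> R" for r
    using D_below[OF that] \<open>finite D\<close> by (meson Min_le order_trans)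
  ultimately have "Inf R = Min D" by (intro cInf_eq_minimum)
  with \<open>Min D \<in> R\<close> show ?thesis by (simp add: dS_eq R_def)
qed

definition radius_separated :: "('a::metric_space \<Rightarrow> real) \<Rightarrow> 'a set \<Rightarrow> bool" where
  "radius_separated r S \<longleftrightarrow> (\<forall>s\<^sub>1\<in>S. \<forall>s\<^sub>2\<in>S. s\<^sub>1 \<noteq> s\<^sub>2 \<longrightarrow> r s\<^sub>1 + r s\<^sub>2 < dist s\<^sub>1 s\<^sub>2)"

lemma radius_separated_insert:
  "radius_separated r (insert y S) \<longleftrightarrow>
     radius_separated r S \<and> (\<forall>s\<in>S. s \<noteq> y \<longrightarrow> r s + r y < dist s y)"
  unfolding radius_separated_def by (auto simp: dist_commute add.commute)

lemma radius_separated_cballs_disjoint: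
  assumes "radius_separated r S"
  shows "disjoint_family_on (\<lambda>s. cball s (r s)) S"
proof (unfold disjoint_family_on_def, intro ballI impI)
  fix s\<^sub>1 s\<^sub>2 assume "s\<^sub>1 \<in> S" "s\<^sub>2 \<in> S" "s\<^sub>1 \<noteq> s\<^sub>2"
  with assms have "r s\<^sub>1 + r s\<^sub>2 < dist s\<^sub>1 s\<^sub>2" by (simp add: radius_separated_def)
  then show "cball s\<^sub>1 (r s\<^sub>1) \<inter> cball s\<^sub>2 (r s\<^sub>2) = {}" by (rule disjoint_cballI)
qed

lemma exists_radius_separated_double_cover:
  fixes r :: "'a::metric_space \<Rightarrow> real"
  assumes "finite Y" "\<And>y. y \<in> Y \<Longrightarrow> 0 \<le> r y"
  shows "\<exists>S\<subseteq>Y. radius_separated r S \<and> (\<forall>y\<in>Y. \<exists>s\<in>S. dist y s \<le> 2 * r y)"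
  using assms
proof (induction "card Y" arbitrary: Y rule: less_induct)
  case less
  show ?case
  proof (cases "Y = {}")
    case True
    then show ?thesis by (simp add: radius_separated_def)
  next
    case False
    define y\<^sub>0 where "y\<^sub>0 = arg_min_on r Y"
    have y\<^sub>0: "y\<^sub>0 \<in> Y" "\<And>y. y \<in> Y \<Longrightarrow> r y\<^sub>0 \<le> r y"
      using arg_min_if_finite[OF \<open>finite Y\<close> False, of r] by (auto simp: y\<^sub>0_def not_less[symmetric])
    define Y' where "Y' = {y \<in> Y. 2 * r y < dist y y\<^sub>0}"
    have "y\<^sub>0 \<notin> Y'" using less.prems(2)[OF y\<^sub>0(1)] by (simp add: Y'_def)
    moreover have "Y' \<subseteq> Y" by (auto simp: Y'_def)
    ultimately have "card Y' < card Y"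
      using y\<^sub>0(1) less.prems(1) by (metis psubset_card_mono psubset_eq)
    moreover have "finite Y'" "\<And>y. y \<in> Y' \<Longrightarrow> 0 \<le> r y"
      using less.prems by (auto simp: Y'_def)
    ultimately obtain S' where S': "S' \<subseteq> Y'" "radius_separated r S'"
        "\<forall>y\<in>Y'. \<exists>s\<in>S'. dist y s \<le> 2 * r y"
      using less.hyps by blast
    have "r s + r y\<^sub>0 < dist s y\<^sub>0" if "s \<in> S'" for s
      using that S'(1) y\<^sub>0(2) by (fastforce simp: Y'_def)
    then have "radius_separated r (insert y\<^sub>0 S')"
      using S'(2) by (simp add: radius_separated_insert)
    moreover have "\<exists>s\<in>insert y\<^sub>0 S'. dist y s \<le> 2 * r y" if "y \<in> Y" for y
    proof (cases "y \<in> Y'")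
      case True
      then show ?thesis using S'(3) by blast
    next
      case False
      with that have "dist y y\<^sub>0 \<le> 2 * r y" by (simp add: Y'_def)
      then show ?thesis by blast
    qed
    moreover have "insert y\<^sub>0 S' \<subseteq> Y" using S'(1) y\<^sub>0(1) by (auto simp: Y'_def)
    ultimately show ?thesis by blast
  qed
qed

lemma card_mult_le_card_if_disjoint_family:
  assumes "finite X" "finite S" "disjoint_family_on B S"
    and "\<And>s. s \<in> S \<Longrightarrow> h \<le> card (X \<inter> B s)"
  shows "card S * h \<le> card X"
proof -
  have "disjoint_family_on (\<lambda>s. X \<inter> B s) S"
    using assms(3) by (rule disjoint_family_on_bisimulation) auto
  then have "card (\<Union>s\<in>S. X \<inter> B s) = (\<Sum>s\<in>S. card (X \<inter> B s))"
    using assms(1,2) by (intro card_UN_disjoint') auto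
  moreover have "card S * h \<le> (\<Sum>s\<in>S. card (X \<inter> B s))"
    using sum_mono[of S "\<lambda>_. h", OF assms(4)] by simp
  moreover have "card (\<Union>s\<in>S. X \<inter> B s) \<le> card X"
    using assms(1) by (intro card_mono) auto
  ultimately show ?thesis by linarith
qed

theorem mainTheorem4:
  fixes X Y :: "'a::metric_space set" and t h :: nat
  assumes "finite X" and "card X = t"
    and "1 \<le> h" and "h \<le> t"
    and "finite Y" and "Y \<noteq> {}"
  shows "\<exists>S. S \<subseteq> Y \<and> S \<noteq> {} \<and> real (card S) \<le> real t / real h \<and>
           (\<forall>y\<in>Y. dS S y 1 \<le> 2 * dS X y h)"
proof -
  define r where "r y = dS X y h" for y
  have r_attained: "0 \<le> r p \<and> h \<le> card (X \<inter> cball p (r p))" for p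
    unfolding r_def using assms(1) by (rule dS_attained) (simp add: assms(2,4))
  obtain S where S: "S \<subseteq> Y" "radius_separated r S" "\<forall>y\<in>Y. \<exists>s\<in>S. dist y s \<le> 2 * r y"
    using exists_radius_separated_double_cover[OF assms(5)] r_attained by blast
  have "finite S" using S(1) assms(5) by (rule finite_subset)
  have "card S * h \<le> card X"
    using r_attained
    by (intro card_mult_le_card_if_disjoint_family[OF assms(1) \<open>finite S\<close>
          radius_separated_cballs_disjoint[OF S(2)]]) blast
  then have "real (card S) * real h \<le> real t"
    using assms(2) by (metis of_nat_le_iff of_nat_mult)
  then have "real (card S) \<le> real t / real h"
    using assms(3) by (simp add: pos_le_divide_eq)
  moreover have "dS S y 1 \<le> 2 * dS X y h" if "y \<in> Y" for y
  proof -
    obtain s where "s \<in> S" "dist y s \<le> 2 * r y" using S(3) \<open>y \<in> Y\<close> by blast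
    with dS_1_le_dist[OF \<open>finite S\<close> \<open>s \<in> S\<close>, of y] show ?thesis by (simp add: r_def)
  qed
  moreover have "S \<noteq> {}" using S(3) assms(6) by blast
  ultimately show ?thesis using S(1) by blast
qed

end
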